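(* Let $(\rho,u,f_H)$ be an optimal triple on $[0,T]$ for the pressure-less Euler control problem. Assume that for every $a\in[0,T)$ there exists an admissible triple $(\tilde\rho,\tilde u,\tilde f_H)$ on $[a,T]$ with $\tilde\rho(a)=\rho(a)$, $\tilde u(a)=u(a)$ and $\tilde f_H=-\lambda^{-1/2}(\tilde u-\bar v)$. Then for every $a\in[0,T]$, $$\int_a^T\int_{\mathbb R^D}\rho|u-\bar v|^2+\lambda\rho|f_H|^2\,dx\,dt\le\sqrt\lambda\int_{\mathbb R^D}\rho(a,x)|u(a,x)-\bar v|^2dx.$$
   Context: Fix $D\ge1$, $T>0$, $\lambda>0$, $\bar v\in\mathbb R^D$, and an interaction kernel $\Psi:\mathbb R^D\times\mathbb R^D\to\mathbb R$ which is Lipschitz continuous, symmetric ($\Psi(x,y)=\Psi(y,x)$), nonnegative and bounded. For $0\le a<T$, an admissible triple on $[a,T]$ for the controlled pressure-less Euler system is $(\rho,u,f_H)$ with $\rho\in C^1([a,T]\times\mathbb R^D;[0,\infty))$, $u\in C^1([a,T]\times\mathbb R^D;\mathbb R^D)$, $f_H\in C([a,T]\times\mathbb R^D;\mathbb R^D)$, such that there is a compact set $K\subset\mathbb R^D$ with $\operatorname{supp}\rho(t,\cdot)\subset K$ for all $t$, and which satisfies classically $\partial_t\rho+\nabla_x\cdot(\rho u)=0$, $\partial_t(\rho u)+\nabla_x\cdot(\rho u\otimes u)=Q_1+\rho f_H$, where $Q_1(t,x)=\int_{\mathbb R^D}\Psi(x,y)\rho(t,x)\rho(t,y)\big(u(t,y)-u(t,x)\big)dy$.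 Its cost on $[a,T]$ is $J^{[a,T]}_{H_1}=\int_a^T\int_{\mathbb R^D}\rho|u-\bar v|^2+\lambda\rho|f_H|^2\,dx\,dt$. An admissible triple on $[0,T]$ is optimal if for every $a\in[0,T)$ its restriction to $[a,T]$ minimizes $J^{[a,T]}_{H_1}$ among all admissible triples on $[a,T]$ with the same values of $(\rho,u)$ at time $a$. *)

theory Defs
  imports "HOL-Analysis.Analysis"
begin

text \<open>Space variable of type 'a :: euclidean_space plays the role of R^D (D = DIM('a) \<ge> 1).
 Fields are curried: rho t x, u t x, f t x.\<close>

definition C1_on :: "real \<Rightarrow> real \<Rightarrow> (real \<Rightarrow> 'a::euclidean_space \<Rightarrow> 'b::euclidean_space) \<Rightarrow> bool" where
  "C1_on a b g \<longleftrightarrow> (\<exists>gt gx.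
     (\<forall>t\<in>{a..b}. \<forall>x. ((\<lambda>s. g s x) has_vector_derivative gt t x) (at t within {a..b})
                      \<and> (g t has_derivative gx t x) (at x))
     \<and> continuous_on ({a..b} \<times> UNIV) (\<lambda>(t,x). gt t x)
     \<and> (\<forall>v. continuous_on ({a..b} \<times> UNIV) (\<lambda>(t,x). gx t x v)))"

definition dtime :: "real \<Rightarrow> real \<Rightarrow> (real \<Rightarrow> 'a \<Rightarrow> 'b::real_normed_vector) \<Rightarrow> real \<Rightarrow> 'a \<Rightarrow> 'b" where
  "dtime a b g t x = vector_derivative (\<lambda>s. g s x) (at t within {a..b})"

definition pderiv_dir :: "('a::real_normed_vector \<Rightarrow> 'b::real_normed_vector) \<Rightarrow> 'a \<Rightarrow> 'a \<Rightarrow> 'b" where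
  "pderiv_dir F x i = frechet_derivative F (at x) i"

definition Q1 :: "('a::euclidean_space \<Rightarrow> 'a \<Rightarrow> real) \<Rightarrow> (real \<Rightarrow> 'a \<Rightarrow> real) \<Rightarrow> (real \<Rightarrow> 'a \<Rightarrow> 'a) \<Rightarrow> real \<Rightarrow> 'a \<Rightarrow> 'a" where
  "Q1 \<Psi> \<rho> u t x = integral UNIV (\<lambda>y. (\<Psi> x y * \<rho> t x * \<rho> t y) *\<^sub>R (u t y - u t x))"

definition admissible :: "('a::euclidean_space \<Rightarrow> 'a \<Rightarrow> real) \<Rightarrow> real \<Rightarrow> real \<Rightarrow>
    (real \<Rightarrow> 'a \<Rightarrow> real) \<Rightarrow> (real \<Rightarrow> 'a \<Rightarrow> 'a) \<Rightarrow> (real \<Rightarrow> 'a \<Rightarrow> 'a) \<Rightarrow> bool" where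
  "admissible \<Psi> a T \<rho> u f \<longleftrightarrow>
     C1_on a T \<rho> \<and> C1_on a T u
     \<and> continuous_on ({a..T} \<times> UNIV) (\<lambda>(t,x). f t x)
     \<and> (\<forall>t\<in>{a..T}. \<forall>x. \<rho> t x \<ge> 0)
     \<and> (\<exists>K. compact K \<and> (\<forall>t\<in>{a..T}. \<forall>x. x \<notin> K \<longrightarrow> \<rho> t x = 0))
     \<and> (\<forall>t\<in>{a..T}. \<forall>x.
          dtime a T \<rho> t x
          + (\<Sum>i\<in>Basis. pderiv_dir (\<lambda>y. \<rho> t y * (u t y \<bullet> i)) x i) = 0)
     \<and> (\<forall>t\<in>{a..T}. \<forall>x.
          dtime a T (\<lambda>s y. \<rho> s y *\<^sub>R u s y) t x
          + (\<Sum>i\<in>Basis. pderiv_dir (\<lambda>y. (\<rho> t y * (u t y \<bullet> i)) *\<^sub>R u t y) x i)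
          = Q1 \<Psi> \<rho> u t x + \<rho> t x *\<^sub>R f t x)"

definition cost :: "real \<Rightarrow> 'a::euclidean_space \<Rightarrow> real \<Rightarrow> real \<Rightarrow>
    (real \<Rightarrow> 'a \<Rightarrow> real) \<Rightarrow> (real \<Rightarrow> 'a \<Rightarrow> 'a) \<Rightarrow> (real \<Rightarrow> 'a \<Rightarrow> 'a) \<Rightarrow> real" where
  "cost lam vbar a T \<rho> u f = integral {a..T} (\<lambda>t. integral UNIV (\<lambda>x.
      \<rho> t x * (norm (u t x - vbar))\<^sup>2 + lam * \<rho> t x * (norm (f t x))\<^sup>2))"

definition optimal :: "('a::euclidean_space \<Rightarrow> 'a \<Rightarrow> real) \<Rightarrow> real \<Rightarrow> 'a \<Rightarrow> real \<Rightarrow>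
    (real \<Rightarrow> 'a \<Rightarrow> real) \<Rightarrow> (real \<Rightarrow> 'a \<Rightarrow> 'a) \<Rightarrow> (real \<Rightarrow> 'a \<Rightarrow> 'a) \<Rightarrow> bool" where
  "optimal \<Psi> lam vbar T \<rho> u f \<longleftrightarrow> admissible \<Psi> 0 T \<rho> u f \<and>
     (\<forall>a\<in>{0..<T}. \<forall>\<rho>' u' f'. admissible \<Psi> a T \<rho>' u' f' \<and> \<rho>' a = \<rho> a \<and> u' a = u a
        \<longrightarrow> cost lam vbar a T \<rho> u f \<le> cost lam vbar a T \<rho>' u' f')"

end

(* Let E(t) be the kinetic energy of rho |u - vbar|^2.  For a < T, optimality bounds the cost
   of (rho, u, f) by that of the feedback triple, for which lam |f|^2 = |u - vbar|^2, so its
   running cost is 2 E(t).  Along a classical solution the transport terms of dE/dt integrate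
   to zero (compact support), the alignment term is nonpositive by the symmetry of Psi, and the
   feedback contributes -(2 / sqrt lam) E.  Hence 2 E <= - sqrt lam E', and integrating over
   [a, T] bounds the cost by sqrt lam (E(a) - E(T)) <= sqrt lam E(a). *)

theory Submission
  imports Defs
begin

section \<open>Joint continuity of \<open>C\<^sup>1\<close> fields\<close>

lemma continuous_on_slice:
  assumes "continuous_on (A \<times> UNIV) (\<lambda>(t,x). g t x)" and "t \<in> A"
  shows "continuous_on UNIV (g t)"
  using continuous_on_o_Pair[OF assms] by (simp add: o_def)

lemma lipschitz_bound_from_partial_derivative:
  fixes g :: "real \<Rightarrow> 'a::euclidean_space \<Rightarrow> 'b::real_normed_vector"
  assumes space: "\<And>t x. t \<in> {a..b} \<Longrightarrow> (g t has_derivative g_x t x) (at x)"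
    and cont: "\<And>v. continuous_on ({a..b} \<times> UNIV) (\<lambda>(t,x). g_x t x v)"
  obtains M where "M \<ge> 0"
    and "\<And>t x. t \<in> {a..b} \<Longrightarrow> x \<in> cball x0 1 \<Longrightarrow> norm (g t x - g t x0) \<le> M * norm (x - x0)"
proof -
  define C where "C = {a..b} \<times> cball x0 1"
  have "continuous_on C (\<lambda>(t,x). \<Sum>i\<in>Basis. norm (g_x t x i))"
    unfolding C_def split_beta
    by (intro continuous_intros continuous_on_subset[OF cont[unfolded split_beta]]) auto
  then have "bounded ((\<lambda>(t,x). \<Sum>i\<in>Basis. norm (g_x t x i)) ` C)"
    by (intro compact_imp_bounded compact_continuous_image) (auto simp: C_def intro!: compact_Times)
  then obtain M where "\<forall>z \<in> C. norm ((\<lambda>(t,x). \<Sum>i\<in>Basis. norm (g_x t x i)) z) \<le> M"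
    unfolding bounded_iff by blast
  then have M: "\<And>t x. (t,x) \<in> C \<Longrightarrow> (\<Sum>i\<in>Basis. norm (g_x t x i)) \<le> M"
    by fastforce
  have "norm (g t x - g t x0) \<le> max M 0 * norm (x - x0)"
    if t: "t \<in> {a..b}" and x: "x \<in> cball x0 1" for t x
  proof (rule differentiable_bound[where S="cball x0 1" and f'="g_x t"])
    fix y assume y: "y \<in> cball x0 1"
    have "onorm (g_x t y) \<le> (\<Sum>i\<in>Basis. norm (g_x t y i))"
      using space[OF t] by (intro onorm_componentwise has_derivative_bounded_linear)
    also have "\<dots> \<le> max M 0" using M[of t y] t y by (auto simp: C_def)
    finally show "onorm (g_x t y) \<le> max M 0" .
  qed (use x space[OF t] in \<open>auto intro: has_derivative_at_withinI\<close>)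
  then show thesis by (intro that[of "max M 0"]) auto
qed

text \<open>The derivative bound makes \<open>g t\<close> Lipschitz near \<open>x0\<close> uniformly in \<open>t\<close>.\<close>
lemma continuous_on_Times_if_continuous_partial_derivative:
  fixes g :: "real \<Rightarrow> 'a::euclidean_space \<Rightarrow> 'b::real_normed_vector"
  assumes time: "\<And>x. continuous_on {a..b} (\<lambda>s. g s x)"
    and space: "\<And>t x. t \<in> {a..b} \<Longrightarrow> (g t has_derivative g_x t x) (at x)"
    and cont: "\<And>v. continuous_on ({a..b} \<times> UNIV) (\<lambda>(t,x). g_x t x v)"
  shows "continuous_on ({a..b} \<times> UNIV) (\<lambda>(t,x). g t x)"
  unfolding continuous_on_iff
proof (intro ballI allI impI, clarify)
  fix t0 x0 and e :: real assume t0: "t0 \<in> {a..b}" and e: "0 < e"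
  obtain M where "M \<ge> 0" and lip:
    "\<And>t x. t \<in> {a..b} \<Longrightarrow> x \<in> cball x0 1 \<Longrightarrow> norm (g t x - g t x0) \<le> M * norm (x - x0)"
    using lipschitz_bound_from_partial_derivative[OF space cont] by blast
  obtain d1 where "d1 > 0" and d1:
    "\<And>s. s \<in> {a..b} \<Longrightarrow> dist s t0 < d1 \<Longrightarrow> dist (g s x0) (g t0 x0) < e/2"
    using time[of x0] t0 e unfolding continuous_on_iff by (meson half_gt_zero)
  define d where "d = min d1 (min 1 (e / (2 * (M + 1))))"
  have "d > 0" unfolding d_def using \<open>d1 > 0\<close> e \<open>M \<ge> 0\<close> by auto
  moreover have "dist (g t x) (g t0 x0) < e" if t: "t \<in> {a..b}" and "dist (t, x) (t0, x0) < d" for t x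
  proof -
    have dt: "dist t t0 < d" and dx: "dist x x0 < d"
      using that dist_fst_le[of "(t, x)" "(t0, x0)"] dist_snd_le[of "(t, x)" "(t0, x0)"] by auto
    have x: "x \<in> cball x0 1" using dx by (auto simp: d_def dist_commute)
    have "dist (g t x) (g t0 x0) \<le> dist (g t x) (g t x0) + dist (g t x0) (g t0 x0)"
      by (rule dist_triangle)
    also have "dist (g t x) (g t x0) \<le> M * norm (x - x0)"
      using lip[OF t x] by (simp add: dist_norm)
    also have "\<dots> \<le> M * (e / (2 * (M + 1)))"
      using dx \<open>M \<ge> 0\<close> by (intro mult_left_mono) (auto simp: dist_norm d_def)
    also have "M * (e / (2 * (M + 1))) < e/2"
      using \<open>M \<ge> 0\<close> e by (simp add: field_simps)
    also have "dist (g t x0) (g t0 x0) < e/2" using d1[OF t] dt by (auto simp: d_def)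
    finally show ?thesis by simp
  qed
  ultimately show "\<exists>d>0. \<forall>p\<in>{a..b} \<times> UNIV. dist p (t0, x0) < d \<longrightarrow>
          dist ((\<lambda>(t,x). g t x) p) (g t0 x0) < e"
    by force
qed

section \<open>Compactly supported integrands\<close>

lemma integral_UNIV_vanishing_outside:
  fixes g :: "'a::euclidean_space \<Rightarrow> 'b::banach"
  assumes "\<And>x. x \<notin> S \<Longrightarrow> g x = 0"
  shows "integral UNIV g = integral S g"
proof -
  have "g = (\<lambda>x. if x \<in> S then g x else 0)" using assms by auto
  then show ?thesis by (metis integral_restrict_UNIV)
qed

lemma has_derivative_vanishing_outside_closed:
  fixes F :: "'a::real_normed_vector \<Rightarrow> 'b::real_normed_vector"
  assumes "(F has_derivative F') (at x)" and "closed K" and "\<And>y. y \<notin> K \<Longrightarrow> F y = 0"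
    and "x \<notin> K"
  shows "F' = (\<lambda>_. 0)"
proof -
  have "(F has_derivative (\<lambda>_. 0)) (at x)"
    by (rule has_derivative_transform_within_open[where f="\<lambda>_. 0" and s="- K"])
       (use assms in auto)
  with assms(1) show ?thesis by (rule has_derivative_unique)
qed

lemma integral_shift_vanishing_outside:
  fixes F :: "'a::euclidean_space \<Rightarrow> 'b::banach"
  assumes "continuous_on UNIV F" and "\<And>x. x \<notin> cbox (lo + d) (hi + d) \<Longrightarrow> F x = 0"
  shows "integral (cbox lo hi) (\<lambda>x. F (x + d)) = integral UNIV F"
proof -
  have "F integrable_on cbox (lo + d) (hi + d)"
    by (rule integrable_continuous, rule continuous_on_subset[OF assms(1)]) auto
  moreover have "integral UNIV F = integral (cbox (lo + d) (hi + d)) F"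
    by (rule integral_UNIV_vanishing_outside) (rule assms(2))
  ultimately have "(F has_integral integral UNIV F) (cbox (lo + d) (hi + d))"
    by (simp add: integrable_integral)
  then have "((F \<circ> (+) d) has_integral integral UNIV F) (cbox lo hi)"
    by (simp only: has_integral_shift_cbox_iff)
  moreover have "F \<circ> (+) d = (\<lambda>x. F (x + d))" by (auto simp: add.commute)
  ultimately show ?thesis by (metis integral_unique)
qed

lemma cbox_subset_shifted_cbox:
  fixes c :: "'a::euclidean_space"
  assumes "i \<in> Basis" and "\<bar>s\<bar> \<le> 1"
  shows "cbox (-c) c \<subseteq> cbox (- c - One + s *\<^sub>R i) (c + One + s *\<^sub>R i)"
proof
  fix x assume x: "x \<in> cbox (-c) c"
  show "x \<in> cbox (- c - One + s *\<^sub>R i) (c + One + s *\<^sub>R i)"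
    unfolding mem_box
  proof (intro ballI conjI)
    fix b :: 'a assume b: "b \<in> Basis"
    have "\<bar>s * (i \<bullet> b)\<bar> \<le> 1"
      using assms b by (auto simp: inner_Basis)
    moreover have "-c \<bullet> b \<le> x \<bullet> b" "x \<bullet> b \<le> c \<bullet> b"
      using x b by (auto simp: mem_box)
    ultimately show "(- c - One + s *\<^sub>R i) \<bullet> b \<le> x \<bullet> b" "x \<bullet> b \<le> (c + One + s *\<^sub>R i) \<bullet> b"
      using b by (auto simp: inner_diff_left inner_add_left abs_le_iff)
  qed
qed

lemma has_vector_derivative_integral_shift:
  fixes F :: "'a::euclidean_space \<Rightarrow> real"
  assumes der: "\<And>x. (F has_derivative F' x) (at x)" and cont: "continuous_on UNIV (\<lambda>x. F' x i)"
  shows "((\<lambda>s. integral (cbox lo hi) (\<lambda>x. F (x + s *\<^sub>R i))) has_vector_derivative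
      integral (cbox lo hi) (\<lambda>x. F' x i)) (at 0)"
proof -
  have contF: "continuous_on UNIV F"
    using der by (meson continuous_at_imp_continuous_on has_derivative_continuous)
  have "((\<lambda>s. integral (cbox lo hi) (\<lambda>x. F (x + s *\<^sub>R i))) has_vector_derivative
      integral (cbox lo hi) (\<lambda>x. F' (x + 0 *\<^sub>R i) i)) (at 0 within UNIV)"
  proof (rule leibniz_rule_vector_derivative[where fx="\<lambda>s x. F' (x + s *\<^sub>R i) i"])
    fix s x
    have "((\<lambda>s. F (x + s *\<^sub>R i)) has_derivative (\<lambda>h. F' (x + s *\<^sub>R i) (h *\<^sub>R i))) (at s)"
      by (rule has_derivative_compose[of "\<lambda>s. x + s *\<^sub>R i" _ _ _ F, unfolded o_def])
         (auto intro!: derivative_eq_intros der)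
    moreover have "linear (F' (x + s *\<^sub>R i))" using der has_derivative_linear by blast
    ultimately show "((\<lambda>s. F (x + s *\<^sub>R i)) has_vector_derivative F' (x + s *\<^sub>R i) i) (at s within UNIV)"
      by (simp add: has_vector_derivative_def linear_scale)
  next
    show "(\<lambda>x. F (x + s *\<^sub>R i)) integrable_on cbox lo hi" for s
      by (intro integrable_continuous continuous_on_compose2[OF contF]) (auto intro!: continuous_intros)
    show "continuous_on (UNIV \<times> cbox lo hi) (\<lambda>(s, x). F' (x + s *\<^sub>R i) i)"
      unfolding split_beta
      by (intro continuous_on_compose2[OF cont]) (auto intro!: continuous_intros)
  qed auto
  then show ?thesis by simp
qed

text \<open>The integral of \<open>F (x + s i)\<close> does not depend on \<open>s\<close>, while its derivative at \<open>s = 0\<close>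
  is the integral of the partial derivative.\<close>
lemma integral_partial_derivative_compact_support:
  fixes F :: "'a::euclidean_space \<Rightarrow> real"
  assumes der: "\<And>x. (F has_derivative F' x) (at x)"
    and cont: "continuous_on UNIV (\<lambda>x. F' x i)" and i: "i \<in> Basis"
    and K: "compact K" and supp: "\<And>x. x \<notin> K \<Longrightarrow> F x = 0"
  shows "integral UNIV (\<lambda>x. F' x i) = 0"
proof -
  have contF: "continuous_on UNIV F"
    using der by (meson continuous_at_imp_continuous_on has_derivative_continuous)
  obtain c where c: "K \<subseteq> cbox (-c) c"
    using bounded_subset_cbox_symmetric[OF compact_imp_bounded[OF K]] by blast
  define H where "H s = integral (cbox (- c - One) (c + One)) (\<lambda>x. F (x + s *\<^sub>R i))" for s
  have H_const: "H s = integral UNIV F" if "s \<in> {-1<..<1}" for s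
  proof -
    have "\<bar>s\<bar> \<le> 1" using that by auto
    with c supp show ?thesis
      unfolding H_def using cbox_subset_shifted_cbox[OF i, of s c]
      by (intro integral_shift_vanishing_outside contF) blast
  qed
  have "(H has_vector_derivative 0) (at 0)"
    by (rule has_vector_derivative_transform_within_open[of "\<lambda>_. integral UNIV F" _ _ "{-1<..<1}"])
       (auto simp: H_const)
  moreover have "(H has_vector_derivative integral (cbox (- c - One) (c + One)) (\<lambda>x. F' x i)) (at 0)"
    unfolding H_def by (rule has_vector_derivative_integral_shift[OF der cont])
  ultimately have "integral (cbox (- c - One) (c + One)) (\<lambda>x. F' x i) = 0"
    by (metis vector_derivative_unique_at)
  moreover have "F' x i = 0" if "x \<notin> cbox (- c - One) (c + One)" for x
  proof -
    have "x \<notin> K" using cbox_subset_shifted_cbox[OF i, of 0 c] c that by auto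
    then show ?thesis
      using has_derivative_vanishing_outside_closed[OF der compact_imp_closed[OF K] supp] by simp
  qed
  ultimately show ?thesis
    by (metis integral_UNIV_vanishing_outside)
qed

section \<open>Dissipation by alignment\<close>

lemma integral_integral_nonpos_by_symmetry:
  fixes k :: "'a::euclidean_space \<Rightarrow> 'a \<Rightarrow> real"
  assumes cont: "continuous_on (cbox lo hi \<times> cbox lo hi) (\<lambda>(x,y). k x y)"
    and nonpos: "\<And>x y. k x y + k y x \<le> 0"
  shows "integral (cbox lo hi) (\<lambda>x. integral (cbox lo hi) (k x)) \<le> 0"
proof -
  let ?B = "cbox lo hi"
  have cont': "continuous_on (?B \<times> ?B) (\<lambda>(x,y). k y x)"
    using continuous_on_swap_args[OF cont] .
  have int: "(\<lambda>(x,y). k x y) integrable_on ?B \<times> ?B" "(\<lambda>(x,y). k y x) integrable_on ?B \<times> ?B"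
    using cont cont' by (metis cbox_Pair_eq integrable_continuous)+
  have "2 * integral ?B (\<lambda>x. integral ?B (k x))
      = integral (?B \<times> ?B) (\<lambda>(x,y). k x y) + integral (?B \<times> ?B) (\<lambda>(x,y). k y x)"
    using integral_prod_continuous[of lo lo hi hi "\<lambda>(x,y). k x y"]
      integral_swap_continuous[of lo lo hi hi k] integral_prod_continuous[of lo lo hi hi "\<lambda>(x,y). k y x"]
      cont cont' by (simp add: cbox_Pair_eq)
  also have "\<dots> = integral (?B \<times> ?B) (\<lambda>(x,y). k x y + k y x)"
    using integral_add[OF int] by (simp add: case_prod_unfold)
  also have "\<dots> \<le> integral (?B \<times> ?B) (\<lambda>_. 0)"
  proof (rule integral_le)
    show "(\<lambda>(x,y). k x y + k y x) integrable_on ?B \<times> ?B"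
      using integrable_add[OF int] by (simp add: case_prod_unfold)
  qed (use nonpos in \<open>auto intro: integrable_0\<close>)
  finally show ?thesis by simp
qed

text \<open>Alignment only dissipates: symmetrising in \<open>x \<leftrightarrow> y\<close> turns the integrand into
  \<open>-\<Psi> x y r x r y |v y - v x|\<^sup>2 / 2\<close>.\<close>
lemma integral_inner_alignment_nonpos:
  fixes \<Psi> :: "'a::euclidean_space \<Rightarrow> 'a \<Rightarrow> real" and r :: "'a \<Rightarrow> real" and v :: "'a \<Rightarrow> 'a"
  assumes cont_\<Psi>: "continuous_on UNIV (\<lambda>(x,y). \<Psi> x y)"
    and sym: "\<And>x y. \<Psi> x y = \<Psi> y x" and nonneg: "\<And>x y. \<Psi> x y \<ge> 0"
    and r_nonneg: "\<And>x. r x \<ge> 0" and cont_r: "continuous_on UNIV r" and cont_v: "continuous_on UNIV v"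
  shows "integral (cbox lo hi)
      (\<lambda>x. (v x - vbar) \<bullet> integral (cbox lo hi) (\<lambda>y. (\<Psi> x y * r x * r y) *\<^sub>R (v y - v x))) \<le> 0"
proof -
  define k where "k x y = (\<Psi> x y * r x * r y) * ((v x - vbar) \<bullet> (v y - v x))" for x y
  have cont_\<Psi>': "continuous_on S (\<lambda>p. \<Psi> (fst p) (snd p))" for S
    using continuous_on_subset[OF cont_\<Psi>] by (simp add: split_beta)
  have "continuous_on S (\<lambda>p. k (fst p) (snd p))" for S
    unfolding k_def
    by (intro continuous_intros cont_\<Psi>' continuous_on_compose2[OF cont_r]
        continuous_on_compose2[OF cont_v]) auto
  then have "integral (cbox lo hi) (\<lambda>x. integral (cbox lo hi) (k x)) \<le> 0"
  proof (intro integral_integral_nonpos_by_symmetry)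
    show "k x y + k y x \<le> 0" for x y
    proof -
      have "k x y + k y x = - (\<Psi> x y * r x * r y) * ((v y - v x) \<bullet> (v y - v x))"
        unfolding k_def using sym[of x y]
        by (simp add: algebra_simps inner_diff_left inner_diff_right inner_commute)
      also have "\<dots> \<le> 0" using nonneg[of x y] r_nonneg[of x] r_nonneg[of y] by simp
      finally show ?thesis .
    qed
  qed (simp add: split_beta)
  moreover have "(v x - vbar) \<bullet> integral (cbox lo hi) (\<lambda>y. (\<Psi> x y * r x * r y) *\<^sub>R (v y - v x))
      = integral (cbox lo hi) (k x)" for x
  proof -
    have "continuous_on (cbox lo hi) (\<lambda>y. (\<Psi> x y * r x * r y) *\<^sub>R (v y - v x))"
      by (intro continuous_intros continuous_on_compose2[OF cont_\<Psi>'[of UNIV], of _ "Pair x", simplified]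
          continuous_on_subset[OF cont_r] continuous_on_subset[OF cont_v]) auto
    then show ?thesis
      unfolding k_def
      by (subst integral_linear[OF integrable_continuous bounded_linear_inner_right, symmetric])
         (auto simp: o_def)
  qed
  ultimately show ?thesis by simp
qed

section \<open>Energy identities\<close>

lemma has_derivative_mass_flux:
  fixes R :: "'a::euclidean_space \<Rightarrow> real" and V :: "'a \<Rightarrow> 'a"
  assumes "(R has_derivative R') (at x)" and "(V has_derivative V') (at x)"
  shows "((\<lambda>y. R y * (V y \<bullet> i)) has_derivative (\<lambda>h. R' h * (V x \<bullet> i) + R x * (V' h \<bullet> i))) (at x)"
  using has_derivative_mult[OF assms(1) has_derivative_inner_left[OF assms(2)]]
  by (simp add: algebra_simps)

lemma has_derivative_momentum_flux:
  fixes R :: "'a::euclidean_space \<Rightarrow> real" and V :: "'a \<Rightarrow> 'a"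
  assumes "(R has_derivative R') (at x)" and "(V has_derivative V') (at x)"
  shows "((\<lambda>y. (R y * (V y \<bullet> i)) *\<^sub>R V y) has_derivative
      (\<lambda>h. (R' h * (V x \<bullet> i) + R x * (V' h \<bullet> i)) *\<^sub>R V x + (R x * (V x \<bullet> i)) *\<^sub>R V' h)) (at x)"
  using has_derivative_scaleR[OF has_derivative_mass_flux[OF assms] assms(2)]
  by (simp add: algebra_simps)

lemma has_derivative_energy_flux:
  fixes R :: "'a::euclidean_space \<Rightarrow> real" and V :: "'a \<Rightarrow> 'a"
  assumes "(R has_derivative R') (at x)" and "(V has_derivative V') (at x)"
  shows "((\<lambda>y. R y * (V y \<bullet> i) * ((V y - vbar) \<bullet> (V y - vbar))) has_derivative
      (\<lambda>h. (R' h * (V x \<bullet> i) + R x * (V' h \<bullet> i)) * ((V x - vbar) \<bullet> (V x - vbar))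
         + (R x * (V x \<bullet> i)) * (2 * ((V x - vbar) \<bullet> V' h)))) (at x)"
proof -
  have "((\<lambda>y. V y - vbar) has_derivative V') (at x)"
    using has_derivative_diff[OF assms(2) has_derivative_const] by simp
  from has_derivative_inner[OF this this]
  have "((\<lambda>y. (V y - vbar) \<bullet> (V y - vbar)) has_derivative (\<lambda>h. 2 * ((V x - vbar) \<bullet> V' h))) (at x)"
    by (simp add: algebra_simps inner_commute)
  from has_derivative_mult[OF has_derivative_mass_flux[OF assms] this] show ?thesis
    by (simp add: algebra_simps)
qed

lemma has_vector_derivative_momentum:
  fixes R :: "real \<Rightarrow> real" and V :: "real \<Rightarrow> 'a::real_normed_vector"
  assumes "(R has_vector_derivative R') (at t within S)" and "(V has_vector_derivative V') (at t within S)"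
  shows "((\<lambda>s. R s *\<^sub>R V s) has_vector_derivative (R' *\<^sub>R V t + R t *\<^sub>R V')) (at t within S)"
  using has_derivative_scaleR[OF assms[unfolded has_vector_derivative_def]]
  by (simp add: has_vector_derivative_def algebra_simps)

lemma has_vector_derivative_energy_density:
  fixes R :: "real \<Rightarrow> real" and V :: "real \<Rightarrow> 'a::real_inner"
  assumes "(R has_vector_derivative R') (at t within S)" and "(V has_vector_derivative V') (at t within S)"
  shows "((\<lambda>s. R s * ((V s - vbar) \<bullet> (V s - vbar))) has_vector_derivative
      (R' * ((V t - vbar) \<bullet> (V t - vbar)) + R t * (2 * ((V t - vbar) \<bullet> V'))))
      (at t within S)"
proof -
  have "((\<lambda>s. V s - vbar) has_derivative (\<lambda>h. h *\<^sub>R V')) (at t within S)"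
    using has_derivative_diff[OF assms(2)[unfolded has_vector_derivative_def] has_derivative_const]
    by simp
  from has_derivative_inner[OF this this]
  have "((\<lambda>s. (V s - vbar) \<bullet> (V s - vbar)) has_derivative (\<lambda>h. h * (2 * ((V t - vbar) \<bullet> V'))))
      (at t within S)"
    by (simp add: algebra_simps inner_commute)
  from has_derivative_mult[OF assms(1)[unfolded has_vector_derivative_def] this] show ?thesis
    by (simp add: has_vector_derivative_def algebra_simps)
qed

text \<open>The continuity equation removes the transport of \<open>|v - vbar|\<^sup>2\<close>, so only
  \<open>2 (v - vbar) \<bullet> (r v\<^sub>t + r (v \<bullet> \<nabla>) v)\<close> remains, and the momentum equation evaluates it.\<close>
lemma energy_balance_algebraic:
  fixes r rt :: real and v vt Q fv vbar :: "'a::euclidean_space"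
    and rx :: "'a \<Rightarrow> real" and vx :: "'a \<Rightarrow> 'a"
  assumes cont: "rt + (\<Sum>i\<in>Basis. rx i * (v \<bullet> i) + r * (vx i \<bullet> i)) = 0"
    and mom: "(rt *\<^sub>R v + r *\<^sub>R vt)
      + (\<Sum>i\<in>Basis. (rx i * (v \<bullet> i) + r * (vx i \<bullet> i)) *\<^sub>R v + (r * (v \<bullet> i)) *\<^sub>R vx i)
      = Q + r *\<^sub>R fv"
  shows "(rt * ((v - vbar) \<bullet> (v - vbar)) + r * (2 * ((v - vbar) \<bullet> vt)))
       + (\<Sum>i\<in>Basis. (rx i * (v \<bullet> i) + r * (vx i \<bullet> i)) * ((v - vbar) \<bullet> (v - vbar))
                      + (r * (v \<bullet> i)) * (2 * ((v - vbar) \<bullet> vx i)))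
       = 2 * ((v - vbar) \<bullet> Q) + 2 * r * ((v - vbar) \<bullet> fv)"
proof -
  define w where "w = v - vbar"
  define S where "S = (\<Sum>i\<in>Basis. rx i * (v \<bullet> i) + r * (vx i \<bullet> i))"
  define V where "V = (\<Sum>i\<in>Basis. (r * (v \<bullet> i)) *\<^sub>R vx i)"
  have "(rt + S) *\<^sub>R v + (r *\<^sub>R vt + V) = Q + r *\<^sub>R fv"
    using mom unfolding S_def V_def by (simp add: sum.distrib scaleR_sum_left algebra_simps)
  with cont have transport: "r *\<^sub>R vt + V = Q + r *\<^sub>R fv" unfolding S_def by simp
  have "(rt * (w \<bullet> w) + r * (2 * (w \<bullet> vt)))
       + (\<Sum>i\<in>Basis. (rx i * (v \<bullet> i) + r * (vx i \<bullet> i)) * (w \<bullet> w) + (r * (v \<bullet> i)) * (2 * (w \<bullet> vx i)))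
       = (rt + S) * (w \<bullet> w) + 2 * (w \<bullet> (r *\<^sub>R vt + V))"
    unfolding S_def V_def
    by (simp add: sum.distrib sum_distrib_left sum_distrib_right inner_sum_right inner_add_right
        algebra_simps)
  also have "\<dots> = 2 * (w \<bullet> Q) + 2 * r * (w \<bullet> fv)"
    using cont transport unfolding S_def by (simp add: inner_add_right algebra_simps)
  finally show ?thesis unfolding w_def .
qed

lemma integral_le_by_dissipation:
  fixes E E' g :: "real \<Rightarrow> real"
  assumes "a \<le> b"
    and "\<And>t. t \<in> {a..b} \<Longrightarrow> (E has_vector_derivative E' t) (at t within {a..b})"
    and "g integrable_on {a..b}" and "\<And>t. t \<in> {a..b} \<Longrightarrow> g t \<le> - k * E' t"
    and "0 \<le> k" and "0 \<le> E b"
  shows "integral {a..b} g \<le> k * E a"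
proof -
  have "(E' has_integral E b - E a) {a..b}"
    using assms(1,2) by (rule fundamental_theorem_of_calculus)
  then have "((\<lambda>t. - k * E' t) has_integral - k * (E b - E a)) {a..b}"
    by (rule has_integral_mult_right)
  with assms(3,4) have "integral {a..b} g \<le> - k * (E b - E a)"
    by (intro has_integral_le[OF integrable_integral]) auto
  also have "\<dots> \<le> k * E a"
    using assms(5,6) by (simp add: algebra_simps)
  finally show ?thesis .
qed

definition kinetic_energy :: "'a::euclidean_space \<Rightarrow> (real \<Rightarrow> 'a \<Rightarrow> real) \<Rightarrow> (real \<Rightarrow> 'a \<Rightarrow> 'a)
    \<Rightarrow> real \<Rightarrow> real" where
  "kinetic_energy vbar \<rho> u t = integral UNIV (\<lambda>x. \<rho> t x * (norm (u t x - vbar))\<^sup>2)"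

lemma kinetic_energy_nonneg:
  assumes "\<And>x. 0 \<le> \<rho> t x"
  shows "0 \<le> kinetic_energy vbar \<rho> u t"
  unfolding kinetic_energy_def
  by (cases "(\<lambda>x. \<rho> t x * (norm (u t x - vbar))\<^sup>2) integrable_on UNIV")
     (auto intro: integral_nonneg simp: assms not_integrable_integral)

lemma cost_feedback_eq:
  assumes lam: "lam > 0"
    and feedback: "\<And>t x. t \<in> {a..T} \<Longrightarrow> f t x = - (1 / sqrt lam) *\<^sub>R (u t x - vbar)"
  shows "cost lam vbar a T \<rho> u f = integral {a..T} (\<lambda>t. 2 * kinetic_energy vbar \<rho> u t)"
  unfolding cost_def
proof (rule integral_cong)
  fix t assume t: "t \<in> {a..T}"
  have "lam * (norm (f t x))\<^sup>2 = (norm (u t x - vbar))\<^sup>2" for x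
    using lam by (simp add: feedback[OF t] power_mult_distrib power_divide)
  then have pointwise: "\<rho> t x * (norm (u t x - vbar))\<^sup>2 + lam * \<rho> t x * (norm (f t x))\<^sup>2
      = 2 * (\<rho> t x * (norm (u t x - vbar))\<^sup>2)" for x
    by (metis mult.assoc mult.commute mult_2)
  show "integral UNIV (\<lambda>x. \<rho> t x * (norm (u t x - vbar))\<^sup>2 + lam * \<rho> t x * (norm (f t x))\<^sup>2)
      = 2 * kinetic_energy vbar \<rho> u t"
    unfolding pointwise using integral_cmul[of UNIV 2 "\<lambda>x. \<rho> t x * (norm (u t x - vbar))\<^sup>2"]
    by (simp add: kinetic_energy_def)
qed

section \<open>Energy estimate for classical solutions\<close>

text \<open>\<open>\<rho>_x t x\<close> and \<open>u_x t x\<close> are spatial Frechet derivatives; the two equations are those of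
  \<open>admissible\<close> with the product rule carried out.\<close>
locale classical_solution =
  fixes \<Psi> :: "'a::euclidean_space \<Rightarrow> 'a \<Rightarrow> real" and a T :: real
    and \<rho> :: "real \<Rightarrow> 'a \<Rightarrow> real" and u f :: "real \<Rightarrow> 'a \<Rightarrow> 'a"
    and \<rho>_t :: "real \<Rightarrow> 'a \<Rightarrow> real" and \<rho>_x :: "real \<Rightarrow> 'a \<Rightarrow> 'a \<Rightarrow> real"
    and u_t :: "real \<Rightarrow> 'a \<Rightarrow> 'a" and u_x :: "real \<Rightarrow> 'a \<Rightarrow> 'a \<Rightarrow> 'a"
    and lo hi :: 'a
  assumes a_less_T: "a < T"
    and \<rho>_time_derivative:
      "\<And>t x. t \<in> {a..T} \<Longrightarrow> ((\<lambda>s. \<rho> s x) has_vector_derivative \<rho>_t t x) (at t within {a..T})"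
    and \<rho>_space_derivative: "\<And>t x. t \<in> {a..T} \<Longrightarrow> (\<rho> t has_derivative \<rho>_x t x) (at x)"
    and u_time_derivative:
      "\<And>t x. t \<in> {a..T} \<Longrightarrow> ((\<lambda>s. u s x) has_vector_derivative u_t t x) (at t within {a..T})"
    and u_space_derivative: "\<And>t x. t \<in> {a..T} \<Longrightarrow> (u t has_derivative u_x t x) (at x)"
    and continuous_\<rho>: "continuous_on ({a..T} \<times> UNIV) (\<lambda>(t,x). \<rho> t x)"
    and continuous_u: "continuous_on ({a..T} \<times> UNIV) (\<lambda>(t,x). u t x)"
    and continuous_\<rho>_t: "continuous_on ({a..T} \<times> UNIV) (\<lambda>(t,x). \<rho>_t t x)"
    and continuous_u_t: "continuous_on ({a..T} \<times> UNIV) (\<lambda>(t,x). u_t t x)"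
    and continuous_\<rho>_x: "\<And>e. continuous_on ({a..T} \<times> UNIV) (\<lambda>(t,x). \<rho>_x t x e)"
    and continuous_u_x: "\<And>e. continuous_on ({a..T} \<times> UNIV) (\<lambda>(t,x). u_x t x e)"
    and continuous_f: "continuous_on ({a..T} \<times> UNIV) (\<lambda>(t,x). f t x)"
    and \<rho>_nonneg: "\<And>t x. t \<in> {a..T} \<Longrightarrow> 0 \<le> \<rho> t x"
    and \<rho>_support: "\<And>t x. t \<in> {a..T} \<Longrightarrow> x \<notin> cbox lo hi \<Longrightarrow> \<rho> t x = 0"
    and continuity_equation: "\<And>t x. t \<in> {a..T} \<Longrightarrow>
      \<rho>_t t x + (\<Sum>i\<in>Basis. \<rho>_x t x i * (u t x \<bullet> i) + \<rho> t x * (u_x t x i \<bullet> i)) = 0"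
    and momentum_equation: "\<And>t x. t \<in> {a..T} \<Longrightarrow>
      (\<rho>_t t x *\<^sub>R u t x + \<rho> t x *\<^sub>R u_t t x)
      + (\<Sum>i\<in>Basis. (\<rho>_x t x i * (u t x \<bullet> i) + \<rho> t x * (u_x t x i \<bullet> i)) *\<^sub>R u t x
                     + (\<rho> t x * (u t x \<bullet> i)) *\<^sub>R u_x t x i)
      = Q1 \<Psi> \<rho> u t x + \<rho> t x *\<^sub>R f t x"
begin

lemma continuous_on_slices:
  assumes "t \<in> {a..T}"
  shows "continuous_on UNIV (\<rho> t)" "continuous_on UNIV (u t)" "continuous_on UNIV (f t)"
    "continuous_on UNIV (\<rho>_t t)" "continuous_on UNIV (u_t t)"
    "continuous_on UNIV (\<lambda>x. \<rho>_x t x e)" "continuous_on UNIV (\<lambda>x. u_x t x e)"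
  using continuous_on_slice[OF continuous_\<rho> assms] continuous_on_slice[OF continuous_u assms]
    continuous_on_slice[OF continuous_f assms] continuous_on_slice[OF continuous_\<rho>_t assms]
    continuous_on_slice[OF continuous_u_t assms] continuous_on_slice[OF continuous_\<rho>_x assms]
    continuous_on_slice[OF continuous_u_x assms]
  by simp_all

text \<open>\<open>\<partial>\<^sub>t (\<rho> |u - vbar|\<^sup>2)\<close> and \<open>\<partial>\<^sub>i (\<rho> u\<^sub>i |u - vbar|\<^sup>2)\<close>.\<close>
definition energy_time_derivative :: "'a \<Rightarrow> real \<Rightarrow> 'a \<Rightarrow> real" where
  "energy_time_derivative vbar t x =
     \<rho>_t t x * ((u t x - vbar) \<bullet> (u t x - vbar)) + \<rho> t x * (2 * ((u t x - vbar) \<bullet> u_t t x))"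

definition energy_flux_derivative :: "'a \<Rightarrow> real \<Rightarrow> 'a \<Rightarrow> 'a \<Rightarrow> real" where
  "energy_flux_derivative vbar t x i =
     (\<rho>_x t x i * (u t x \<bullet> i) + \<rho> t x * (u_x t x i \<bullet> i)) * ((u t x - vbar) \<bullet> (u t x - vbar))
     + (\<rho> t x * (u t x \<bullet> i)) * (2 * ((u t x - vbar) \<bullet> u_x t x i))"

lemma energy_balance:
  assumes "t \<in> {a..T}"
  shows "energy_time_derivative vbar t x + (\<Sum>i\<in>Basis. energy_flux_derivative vbar t x i)
    = 2 * ((u t x - vbar) \<bullet> Q1 \<Psi> \<rho> u t x) + 2 * \<rho> t x * ((u t x - vbar) \<bullet> f t x)"
  unfolding energy_time_derivative_def energy_flux_derivative_def
  by (rule energy_balance_algebraic[OF continuity_equation[OF assms] momentum_equation[OF assms]])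

lemma integral_energy_flux_derivative:
  assumes t: "t \<in> {a..T}" and i: "i \<in> Basis"
  shows "integral (cbox lo hi) (\<lambda>x. energy_flux_derivative vbar t x i) = 0"
proof -
  note cont = continuous_on_slices[OF t]
  have "integral UNIV (\<lambda>x. energy_flux_derivative vbar t x i) = 0"
    unfolding energy_flux_derivative_def
  proof (rule integral_partial_derivative_compact_support[OF _ _ i compact_cbox, where
        F'="\<lambda>x h. (\<rho>_x t x h * (u t x \<bullet> i) + \<rho> t x * (u_x t x h \<bullet> i)) * ((u t x - vbar) \<bullet> (u t x - vbar))
           + (\<rho> t x * (u t x \<bullet> i)) * (2 * ((u t x - vbar) \<bullet> u_x t x h))"])
    show "((\<lambda>y. \<rho> t y * (u t y \<bullet> i) * ((u t y - vbar) \<bullet> (u t y - vbar))) has_derivative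
        (\<lambda>h. (\<rho>_x t x h * (u t x \<bullet> i) + \<rho> t x * (u_x t x h \<bullet> i)) * ((u t x - vbar) \<bullet> (u t x - vbar))
           + (\<rho> t x * (u t x \<bullet> i)) * (2 * ((u t x - vbar) \<bullet> u_x t x h)))) (at x)" for x
      by (rule has_derivative_energy_flux[OF \<rho>_space_derivative[OF t] u_space_derivative[OF t]])
  qed (use \<rho>_support[OF t] in \<open>auto intro!: continuous_intros cont\<close>)
  moreover have "energy_flux_derivative vbar t x i = 0" if "x \<notin> cbox lo hi" for x
    using has_derivative_vanishing_outside_closed[OF \<rho>_space_derivative[OF t] closed_cbox
        \<rho>_support[OF t] that] \<rho>_support[OF t that]
    by (simp add: energy_flux_derivative_def)
  ultimately show ?thesis
    by (metis integral_UNIV_vanishing_outside)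
qed

lemma kinetic_energy_eq_integral_cbox:
  assumes "t \<in> {a..T}"
  shows "kinetic_energy vbar \<rho> u t = integral (cbox lo hi) (\<lambda>x. \<rho> t x * ((u t x - vbar) \<bullet> (u t x - vbar)))"
  unfolding kinetic_energy_def power2_norm_eq_inner
  by (rule integral_UNIV_vanishing_outside) (use \<rho>_support[OF assms] in simp)

lemma kinetic_energy_has_derivative:
  assumes t: "t \<in> {a..T}"
  shows "(kinetic_energy vbar \<rho> u has_vector_derivative
      integral (cbox lo hi) (energy_time_derivative vbar t)) (at t within {a..T})"
proof (rule has_vector_derivative_transform[OF t kinetic_energy_eq_integral_cbox])
  show "((\<lambda>s. integral (cbox lo hi) (\<lambda>x. \<rho> s x * ((u s x - vbar) \<bullet> (u s x - vbar))))
      has_vector_derivative integral (cbox lo hi) (energy_time_derivative vbar t)) (at t within {a..T})"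
  proof (rule leibniz_rule_vector_derivative)
    fix s x assume "s \<in> {a..T}"
    then show "((\<lambda>s. \<rho> s x * ((u s x - vbar) \<bullet> (u s x - vbar))) has_vector_derivative
        energy_time_derivative vbar s x) (at s within {a..T})"
      unfolding energy_time_derivative_def
      by (intro has_vector_derivative_energy_density \<rho>_time_derivative u_time_derivative)
  next
    fix s assume "s \<in> {a..T}"
    note cont = continuous_on_slices[OF this]
    show "(\<lambda>x. \<rho> s x * ((u s x - vbar) \<bullet> (u s x - vbar))) integrable_on cbox lo hi"
      by (intro integrable_continuous continuous_intros continuous_on_subset[OF cont(1)]
          continuous_on_subset[OF cont(2)]) auto
  next
    have "continuous_on ({a..T} \<times> UNIV) (\<lambda>p. energy_time_derivative vbar (fst p) (snd p))"
      using continuous_\<rho> continuous_u continuous_\<rho>_t continuous_u_t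
      unfolding energy_time_derivative_def case_prod_unfold by (intro continuous_intros)
    then show "continuous_on ({a..T} \<times> cbox lo hi) (\<lambda>(s, x). energy_time_derivative vbar s x)"
      unfolding case_prod_unfold by (rule continuous_on_subset) auto
  qed (use t in auto)
qed


lemma integral_alignment_nonpos:
  assumes "continuous_on UNIV (\<lambda>(x,y). \<Psi> x y)"
    and "\<And>x y. \<Psi> x y = \<Psi> y x" and "\<And>x y. \<Psi> x y \<ge> 0"
    and t: "t \<in> {a..T}"
  shows "integral (cbox lo hi) (\<lambda>x. (u t x - vbar) \<bullet> Q1 \<Psi> \<rho> u t x) \<le> 0"
proof -
  have "Q1 \<Psi> \<rho> u t x = integral (cbox lo hi) (\<lambda>y. (\<Psi> x y * \<rho> t x * \<rho> t y) *\<^sub>R (u t y - u t x))" for x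
    unfolding Q1_def by (rule integral_UNIV_vanishing_outside) (simp add: \<rho>_support[OF t])
  with integral_inner_alignment_nonpos[OF assms(1-3) \<rho>_nonneg[OF t] continuous_on_slices(1,2)[OF t]]
  show ?thesis by simp
qed

lemma integral_energy_time_derivative:
  assumes t: "t \<in> {a..T}"
  shows "integral (cbox lo hi) (energy_time_derivative vbar t)
    = 2 * integral (cbox lo hi) (\<lambda>x. (u t x - vbar) \<bullet> Q1 \<Psi> \<rho> u t x)
      + 2 * integral (cbox lo hi) (\<lambda>x. \<rho> t x * ((u t x - vbar) \<bullet> f t x))"
proof -
  let ?B = "cbox lo hi" and ?alignment = "\<lambda>x. (u t x - vbar) \<bullet> Q1 \<Psi> \<rho> u t x"
  have integrable: "g integrable_on ?B" if "continuous_on UNIV g" for g :: "'a \<Rightarrow> real"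
    by (rule integrable_continuous, rule continuous_on_subset[OF that]) auto
  have int_time: "energy_time_derivative vbar t integrable_on ?B"
    and int_flux: "\<And>i. (\<lambda>x. energy_flux_derivative vbar t x i) integrable_on ?B"
    and int_control: "(\<lambda>x. \<rho> t x * ((u t x - vbar) \<bullet> f t x)) integrable_on ?B"
    unfolding energy_time_derivative_def energy_flux_derivative_def
    by (intro integrable continuous_intros continuous_on_slices[OF t])+
  have int_balance: "(\<lambda>x. energy_time_derivative vbar t x
      + (\<Sum>i\<in>Basis. energy_flux_derivative vbar t x i)) integrable_on ?B"
    using integrable_add[OF int_time integrable_sum[of Basis "\<lambda>i x. energy_flux_derivative vbar t x i"]]
      int_flux by simp
  text \<open>\<open>Q1\<close> is not known to be continuous; the energy balance exhibits the alignment term as a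
    combination of integrable functions.\<close>
  have "?alignment x = (energy_time_derivative vbar t x
      + (\<Sum>i\<in>Basis. energy_flux_derivative vbar t x i)) / 2 - \<rho> t x * ((u t x - vbar) \<bullet> f t x)" for x
    using energy_balance[OF t, of vbar x] by (simp add: field_simps)
  then have int_alignment: "?alignment integrable_on ?B"
    using integrable_diff[OF _ int_control] int_balance by simp
  have "integral ?B (energy_time_derivative vbar t)
      = integral ?B (\<lambda>x. energy_time_derivative vbar t x + (\<Sum>i\<in>Basis. energy_flux_derivative vbar t x i))"
    using integral_energy_flux_derivative[OF t]
    by (simp add: integral_add integral_sum int_time int_flux integrable_sum)
  also have "\<dots> = integral ?B (\<lambda>x. 2 * ?alignment x + 2 * \<rho> t x * ((u t x - vbar) \<bullet> f t x))"
    using energy_balance[OF t] by simp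
  also have "\<dots> = 2 * integral ?B ?alignment + 2 * integral ?B (\<lambda>x. \<rho> t x * ((u t x - vbar) \<bullet> f t x))"
    using int_alignment int_control by (simp add: integral_add integrable_on_cmult_left mult.assoc)
  finally show ?thesis .
qed

lemma cost_feedback_le:
  assumes "continuous_on UNIV (\<lambda>(x,y). \<Psi> x y)"
    and "\<And>x y. \<Psi> x y = \<Psi> y x" and "\<And>x y. \<Psi> x y \<ge> 0"
    and lam: "lam > 0"
    and feedback: "\<And>t x. t \<in> {a..T} \<Longrightarrow> f t x = - (1 / sqrt lam) *\<^sub>R (u t x - vbar)"
  shows "cost lam vbar a T \<rho> u f \<le> sqrt lam * kinetic_energy vbar \<rho> u a"
proof -
  let ?E = "kinetic_energy vbar \<rho> u" and ?B = "cbox lo hi"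
  let ?E' = "\<lambda>t. integral ?B (energy_time_derivative vbar t)"
  have "integral {a..T} (\<lambda>t. 2 * ?E t) \<le> sqrt lam * ?E a"
  proof (rule integral_le_by_dissipation[where E' = ?E'])
    show "(?E has_vector_derivative ?E' t) (at t within {a..T})" if "t \<in> {a..T}" for t
      using kinetic_energy_has_derivative[OF that] .
    then have "continuous_on {a..T} ?E"
      using continuous_on_eq_continuous_within has_vector_derivative_continuous by blast
    then show "(\<lambda>t. 2 * ?E t) integrable_on {a..T}"
      by (intro integrable_continuous_real continuous_intros)
    show "2 * ?E t \<le> - sqrt lam * ?E' t" if t: "t \<in> {a..T}" for t
    proof -
      define A where "A = integral ?B (\<lambda>x. (u t x - vbar) \<bullet> Q1 \<Psi> \<rho> u t x)"
      have "integral ?B (\<lambda>x. \<rho> t x * ((u t x - vbar) \<bullet> f t x)) = - (?E t / sqrt lam)"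
        using integral_cmul[of ?B "- 1 / sqrt lam" "\<lambda>x. \<rho> t x * ((u t x - vbar) \<bullet> (u t x - vbar))"]
        by (simp add: kinetic_energy_eq_integral_cbox[OF t] feedback[OF t] algebra_simps)
      with integral_energy_time_derivative[OF t, of vbar]
      have "- sqrt lam * ?E' t = 2 * ?E t - 2 * (sqrt lam * A)"
        using lam by (simp add: A_def field_simps)
      moreover have "sqrt lam * A \<le> 0"
        using integral_alignment_nonpos[OF assms(1-3) t, of vbar] lam
        by (simp add: A_def mult_nonneg_nonpos)
      ultimately show ?thesis by linarith
    qed
    show "0 \<le> ?E T" using \<rho>_nonneg a_less_T by (intro kinetic_energy_nonneg) auto
  qed (use a_less_T lam in auto)
  with cost_feedback_eq[OF lam feedback] show ?thesis by simp
qed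

end


section \<open>Admissible triples are classical solutions\<close>

lemma C1_onE:
  assumes "C1_on a b g"
  obtains g_t g_x where
    "\<And>t x. t \<in> {a..b} \<Longrightarrow> ((\<lambda>s. g s x) has_vector_derivative g_t t x) (at t within {a..b})"
    "\<And>t x. t \<in> {a..b} \<Longrightarrow> (g t has_derivative g_x t x) (at x)"
    "continuous_on ({a..b} \<times> UNIV) (\<lambda>(t,x). g_t t x)"
    "\<And>e. continuous_on ({a..b} \<times> UNIV) (\<lambda>(t,x). g_x t x e)"
    "continuous_on ({a..b} \<times> UNIV) (\<lambda>(t,x). g t x)"
proof -
  obtain g_t g_x where
    time: "\<And>t x. t \<in> {a..b} \<Longrightarrow> ((\<lambda>s. g s x) has_vector_derivative g_t t x) (at t within {a..b})"
    and space: "\<And>t x. t \<in> {a..b} \<Longrightarrow> (g t has_derivative g_x t x) (at x)"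
    and cont_t: "continuous_on ({a..b} \<times> UNIV) (\<lambda>(t,x). g_t t x)"
    and cont_x: "\<And>e. continuous_on ({a..b} \<times> UNIV) (\<lambda>(t,x). g_x t x e)"
    using assms unfolding C1_on_def by blast
  have time_cont: "continuous_on {a..b} (\<lambda>s. g s x)" for x
    using time has_vector_derivative_continuous continuous_on_eq_continuous_within by blast
  have "continuous_on ({a..b} \<times> UNIV) (\<lambda>(t,x). g t x)"
    by (rule continuous_on_Times_if_continuous_partial_derivative[where g_x=g_x])
       (use time_cont space cont_x in auto)
  with time space cont_t cont_x show thesis by - (rule that)
qed

lemma dtime_eq:
  assumes "a < b" and "t \<in> {a..b}"
    and "((\<lambda>s. g s x) has_vector_derivative g') (at t within {a..b})"
  shows "dtime a b g t x = g'"
  using vector_derivative_within_cbox[of a b t] assms by (simp add: dtime_def)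

lemma pderiv_dir_eq:
  assumes "(F has_derivative F') (at x)"
  shows "pderiv_dir F x i = F' i"
  using frechet_derivative_at[OF assms] by (simp add: pderiv_dir_def)

lemma mass_equation_expanded:
  assumes "a < T" and "t \<in> {a..T}"
    and "((\<lambda>s. \<rho> s x) has_vector_derivative \<rho>_t) (at t within {a..T})"
    and "(\<rho> t has_derivative \<rho>_x) (at x)" and "(u t has_derivative u_x) (at x)"
    and "dtime a T \<rho> t x + (\<Sum>i\<in>Basis. pderiv_dir (\<lambda>y. \<rho> t y * (u t y \<bullet> i)) x i) = 0"
  shows "\<rho>_t + (\<Sum>i\<in>Basis. \<rho>_x i * (u t x \<bullet> i) + \<rho> t x * (u_x i \<bullet> i)) = 0"
  using assms(6)
  by (simp add: dtime_eq[where g=\<rho>, OF assms(1-3)]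
      pderiv_dir_eq[OF has_derivative_mass_flux[OF assms(4,5)]])

lemma momentum_equation_expanded:
  assumes "a < T" and "t \<in> {a..T}"
    and "((\<lambda>s. \<rho> s x) has_vector_derivative \<rho>_t) (at t within {a..T})"
    and "((\<lambda>s. u s x) has_vector_derivative u_t) (at t within {a..T})"
    and "(\<rho> t has_derivative \<rho>_x) (at x)" and "(u t has_derivative u_x) (at x)"
    and "dtime a T (\<lambda>s y. \<rho> s y *\<^sub>R u s y) t x
      + (\<Sum>i\<in>Basis. pderiv_dir (\<lambda>y. (\<rho> t y * (u t y \<bullet> i)) *\<^sub>R u t y) x i) = Q"
  shows "(\<rho>_t *\<^sub>R u t x + \<rho> t x *\<^sub>R u_t)
      + (\<Sum>i\<in>Basis. (\<rho>_x i * (u t x \<bullet> i) + \<rho> t x * (u_x i \<bullet> i)) *\<^sub>R u t x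
                     + (\<rho> t x * (u t x \<bullet> i)) *\<^sub>R u_x i) = Q"
  using assms(7)
  by (simp add: dtime_eq[where g="\<lambda>s y. \<rho> s y *\<^sub>R u s y", OF assms(1,2)
        has_vector_derivative_momentum[OF assms(3,4)]]
      pderiv_dir_eq[OF has_derivative_momentum_flux[OF assms(5,6)]])

lemma admissibleE:
  assumes "admissible \<Psi> a T \<rho> u f"
  obtains K where "C1_on a T \<rho>" and "C1_on a T u"
    and "continuous_on ({a..T} \<times> UNIV) (\<lambda>(t,x). f t x)"
    and "\<forall>t\<in>{a..T}. \<forall>x. 0 \<le> \<rho> t x"
    and "compact K" and "\<forall>t\<in>{a..T}. \<forall>x. x \<notin> K \<longrightarrow> \<rho> t x = 0"
    and "\<forall>t\<in>{a..T}. \<forall>x.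
      dtime a T \<rho> t x + (\<Sum>i\<in>Basis. pderiv_dir (\<lambda>y. \<rho> t y * (u t y \<bullet> i)) x i) = 0"
    and "\<forall>t\<in>{a..T}. \<forall>x.
      dtime a T (\<lambda>s y. \<rho> s y *\<^sub>R u s y) t x
      + (\<Sum>i\<in>Basis. pderiv_dir (\<lambda>y. (\<rho> t y * (u t y \<bullet> i)) *\<^sub>R u t y) x i)
      = Q1 \<Psi> \<rho> u t x + \<rho> t x *\<^sub>R f t x"
  using assms unfolding admissible_def by (elim conjE exE) (rule that)

lemma admissible_imp_classical_solution:
  assumes "admissible \<Psi> a T \<rho> u f" and "a < T"
  obtains \<rho>_t \<rho>_x u_t u_x lo hi where "classical_solution \<Psi> a T \<rho> u f \<rho>_t \<rho>_x u_t u_x lo hi"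
proof -
  obtain K where "C1_on a T \<rho>" "C1_on a T u"
    and cont_f: "continuous_on ({a..T} \<times> UNIV) (\<lambda>(t,x). f t x)"
    and nonneg: "\<forall>t\<in>{a..T}. \<forall>x. 0 \<le> \<rho> t x"
    and "compact K" and K: "\<forall>t\<in>{a..T}. \<forall>x. x \<notin> K \<longrightarrow> \<rho> t x = 0"
    and mass: "\<forall>t\<in>{a..T}. \<forall>x.
      dtime a T \<rho> t x + (\<Sum>i\<in>Basis. pderiv_dir (\<lambda>y. \<rho> t y * (u t y \<bullet> i)) x i) = 0"
    and momentum: "\<forall>t\<in>{a..T}. \<forall>x.
      dtime a T (\<lambda>s y. \<rho> s y *\<^sub>R u s y) t x
      + (\<Sum>i\<in>Basis. pderiv_dir (\<lambda>y. (\<rho> t y * (u t y \<bullet> i)) *\<^sub>R u t y) x i)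
      = Q1 \<Psi> \<rho> u t x + \<rho> t x *\<^sub>R f t x"
    using assms(1) by (rule admissibleE)
  obtain \<rho>_t \<rho>_x where
    \<rho>_t: "\<And>t x. t \<in> {a..T} \<Longrightarrow> ((\<lambda>s. \<rho> s x) has_vector_derivative \<rho>_t t x) (at t within {a..T})"
    and \<rho>_x: "\<And>t x. t \<in> {a..T} \<Longrightarrow> (\<rho> t has_derivative \<rho>_x t x) (at x)"
    and \<rho>_cont: "continuous_on ({a..T} \<times> UNIV) (\<lambda>(t,x). \<rho>_t t x)"
      "\<And>e. continuous_on ({a..T} \<times> UNIV) (\<lambda>(t,x). \<rho>_x t x e)"
      "continuous_on ({a..T} \<times> UNIV) (\<lambda>(t,x). \<rho> t x)"
    using \<open>C1_on a T \<rho>\<close> by (rule C1_onE) (rule that)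
  obtain u_t u_x where
    u_t: "\<And>t x. t \<in> {a..T} \<Longrightarrow> ((\<lambda>s. u s x) has_vector_derivative u_t t x) (at t within {a..T})"
    and u_x: "\<And>t x. t \<in> {a..T} \<Longrightarrow> (u t has_derivative u_x t x) (at x)"
    and u_cont: "continuous_on ({a..T} \<times> UNIV) (\<lambda>(t,x). u_t t x)"
      "\<And>e. continuous_on ({a..T} \<times> UNIV) (\<lambda>(t,x). u_x t x e)"
      "continuous_on ({a..T} \<times> UNIV) (\<lambda>(t,x). u t x)"
    using \<open>C1_on a T u\<close> by (rule C1_onE) (rule that)
  obtain c where "K \<subseteq> cbox (-c) c"
    using bounded_subset_cbox_symmetric[OF compact_imp_bounded[OF \<open>compact K\<close>]] by blast
  with K have support: "\<forall>t\<in>{a..T}. \<forall>x. x \<notin> cbox (-c) c \<longrightarrow> \<rho> t x = 0"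
    by blast
  have "\<rho>_t t x + (\<Sum>i\<in>Basis. \<rho>_x t x i * (u t x \<bullet> i) + \<rho> t x * (u_x t x i \<bullet> i)) = 0"
    if t: "t \<in> {a..T}" for t x
    using mass_equation_expanded[where \<rho>=\<rho> and u=u, OF \<open>a < T\<close> t \<rho>_t[OF t] \<rho>_x[OF t] u_x[OF t]] mass t by blast
  moreover have "(\<rho>_t t x *\<^sub>R u t x + \<rho> t x *\<^sub>R u_t t x)
      + (\<Sum>i\<in>Basis. (\<rho>_x t x i * (u t x \<bullet> i) + \<rho> t x * (u_x t x i \<bullet> i)) *\<^sub>R u t x
                     + (\<rho> t x * (u t x \<bullet> i)) *\<^sub>R u_x t x i)
      = Q1 \<Psi> \<rho> u t x + \<rho> t x *\<^sub>R f t x"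
    if t: "t \<in> {a..T}" for t x
    using momentum_equation_expanded[where \<rho>=\<rho> and u=u, OF \<open>a < T\<close> t \<rho>_t[OF t] u_t[OF t] \<rho>_x[OF t] u_x[OF t]]
      momentum t by blast
  ultimately show thesis
    using \<open>a < T\<close> \<rho>_t \<rho>_x \<rho>_cont u_t u_x u_cont cont_f nonneg support
    by (intro that[of \<rho>_t \<rho>_x u_t u_x "-c" c] classical_solution.intro) auto
qed


lemma admissible_feedback_cost_le:
  assumes "admissible \<Psi> a T \<rho> u f" and "a < T"
    and "continuous_on UNIV (\<lambda>(x,y). \<Psi> x y)"
    and "\<And>x y. \<Psi> x y = \<Psi> y x" and "\<And>x y. \<Psi> x y \<ge> 0"
    and "lam > 0"
    and "\<forall>t\<in>{a..T}. \<forall>x. f t x = - (1 / sqrt lam) *\<^sub>R (u t x - vbar)"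
  shows "cost lam vbar a T \<rho> u f \<le> sqrt lam * kinetic_energy vbar \<rho> u a"
proof -
  obtain \<rho>_t \<rho>_x u_t u_x lo hi where "classical_solution \<Psi> a T \<rho> u f \<rho>_t \<rho>_x u_t u_x lo hi"
    using admissible_imp_classical_solution[OF assms(1,2)] .
  then show ?thesis
    using assms(7) by (intro classical_solution.cost_feedback_le[OF _ assms(3-6)]) auto
qed

theorem lemma3p4:
  fixes \<Psi> :: "'a::euclidean_space \<Rightarrow> 'a \<Rightarrow> real"
    and T lam :: real and vbar :: 'a
    and \<rho> :: "real \<Rightarrow> 'a \<Rightarrow> real" and u f :: "real \<Rightarrow> 'a \<Rightarrow> 'a"
  assumes "T > 0" and "lam > 0"
    and "\<exists>L. lipschitz_on L UNIV (\<lambda>(x,y). \<Psi> x y)"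
    and "\<And>x y. \<Psi> x y = \<Psi> y x"
    and "\<And>x y. \<Psi> x y \<ge> 0"
    and "\<exists>B. \<forall>x y. \<Psi> x y \<le> B"
    and "optimal \<Psi> lam vbar T \<rho> u f"
    and "\<forall>a\<in>{0..<T}. \<exists>\<rho>' u' f'. admissible \<Psi> a T \<rho>' u' f' \<and> \<rho>' a = \<rho> a \<and> u' a = u a
           \<and> (\<forall>t\<in>{a..T}. \<forall>x. f' t x = - (1 / sqrt lam) *\<^sub>R (u' t x - vbar))"
  shows "\<forall>a\<in>{0..T}. cost lam vbar a T \<rho> u f
           \<le> sqrt lam * integral UNIV (\<lambda>x. \<rho> a x * (norm (u a x - vbar))\<^sup>2)"
proof
  fix a assume a: "a \<in> {0..T}"
  have "cost lam vbar a T \<rho> u f \<le> sqrt lam * kinetic_energy vbar \<rho> u a"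
  proof (cases "a < T")
    case True
    with a assms(8) obtain \<rho>' u' f' where adm: "admissible \<Psi> a T \<rho>' u' f'"
      and initial: "\<rho>' a = \<rho> a" "u' a = u a"
      and feedback: "\<forall>t\<in>{a..T}. \<forall>x. f' t x = - (1 / sqrt lam) *\<^sub>R (u' t x - vbar)"
      by (meson atLeastAtMost_iff atLeastLessThan_iff)
    have "cost lam vbar a T \<rho> u f \<le> cost lam vbar a T \<rho>' u' f'"
      using assms(7) True a adm initial unfolding optimal_def by auto
    also have "\<dots> \<le> sqrt lam * kinetic_energy vbar \<rho>' u' a"
      using assms(3) lipschitz_on_continuous_on
      by (intro admissible_feedback_cost_le[OF adm True _ assms(4,5,2) feedback]) blast
    also have "\<dots> = sqrt lam * kinetic_energy vbar \<rho> u a"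
      using initial by (simp add: kinetic_energy_def)
    finally show ?thesis .
  next
    case False
    have "\<forall>t\<in>{0..T}. \<forall>x. 0 \<le> \<rho> t x"
      using assms(7) unfolding optimal_def by (auto elim: admissibleE)
    with False a assms(2) show ?thesis
      by (simp add: cost_def kinetic_energy_nonneg)
  qed
  then show "cost lam vbar a T \<rho> u f \<le> sqrt lam * integral UNIV (\<lambda>x. \<rho> a x * (norm (u a x - vbar))\<^sup>2)"
    unfolding kinetic_energy_def .
qed

end
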